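(* Consider a unifilar state channel with state update $z_i=f_{\mathsf z}(z_{i-1},y_i,x_i)$ and output $y_i=f_{\mathsf y}(z_{i-1},x_i,k_i)$, where $f_{\mathsf y}$ and $f_{\mathsf z}$ are Lipschitz with respect to the $\ell^1$ norm with constants $M_y$ and $M_z$ respectively, satisfying $M_z(M_y+1)<1$. Let $n\in\mathbb N$ and let $x^{1,n},x^{2,n}$ be two input sequences with $\max_{t=1,\dots,n}\|x^1_t-x^2_t\|_1\le\eta$, and let $y^{1,n},y^{2,n}$ be the corresponding outputs, generated with the same noise realization $k^n$ and the same initial state. Then $$\max_{t=1,\dots,n}\|y^1_t-y^2_t\|_1\le\frac{M_y\big(2-M_z(M_y+1)\big)}{1-M_z(M_y+1)}\,\eta.$$ *)

theory Defs
  imports "HOL-Analysis.Analysis"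
begin

definition l1norm :: "real ^ 'n \<Rightarrow> real" where
  "l1norm v = (\<Sum>i\<in>UNIV. \<bar>v $ i\<bar>)"

definition lipschitz3_l1 ::
  "real \<Rightarrow> (real ^ 'a \<Rightarrow> real ^ 'b \<Rightarrow> real ^ 'c \<Rightarrow> real ^ 'd) \<Rightarrow> bool" where
  "lipschitz3_l1 M f \<longleftrightarrow>
     (\<forall>a b c a' b' c'. l1norm (f a b c - f a' b' c')
        \<le> M * (l1norm (a - a') + l1norm (b - b') + l1norm (c - c')))"

text \<open>Unifilar state channel: state z_i = fz z_(i-1) y_i x_i,
  output y_i = fy z_(i-1) x_i k_i, initial state z_0; time indices start at 1.\<close>
primrec chan_state ::
  "(real ^ 'z \<Rightarrow> real ^ 'x \<Rightarrow> real ^ 'k \<Rightarrow> real ^ 'y) \<Rightarrow>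
   (real ^ 'z \<Rightarrow> real ^ 'y \<Rightarrow> real ^ 'x \<Rightarrow> real ^ 'z) \<Rightarrow>
   real ^ 'z \<Rightarrow> (nat \<Rightarrow> real ^ 'x) \<Rightarrow> (nat \<Rightarrow> real ^ 'k) \<Rightarrow> nat \<Rightarrow> real ^ 'z" where
  "chan_state fy fz z0 x k 0 = z0"
| "chan_state fy fz z0 x k (Suc i) =
     fz (chan_state fy fz z0 x k i)
        (fy (chan_state fy fz z0 x k i) (x (Suc i)) (k (Suc i)))
        (x (Suc i))"

definition chan_out ::
  "(real ^ 'z \<Rightarrow> real ^ 'x \<Rightarrow> real ^ 'k \<Rightarrow> real ^ 'y) \<Rightarrow>
   (real ^ 'z \<Rightarrow> real ^ 'y \<Rightarrow> real ^ 'x \<Rightarrow> real ^ 'z) \<Rightarrow>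
   real ^ 'z \<Rightarrow> (nat \<Rightarrow> real ^ 'x) \<Rightarrow> (nat \<Rightarrow> real ^ 'k) \<Rightarrow> nat \<Rightarrow> real ^ 'y" where
  "chan_out fy fz z0 x k i = fy (chan_state fy fz z0 x k (i - 1)) (x i) (k i)"

end

theory Submission
  imports Defs
begin

text \<open>Write \<open>a = Mz (My + 1)\<close>. Since the state update sees the input once directly and once
  through the output, the state deviation obeys \<open>d\<^sub>i\<^sub>+\<^sub>1 \<le> a d\<^sub>i + a \<eta>\<close> with \<open>d\<^sub>0 = 0\<close>, hence
  stays below the fixed point \<open>a \<eta> / (1 - a)\<close> because \<open>a < 1\<close>. The output deviation is then at
  most \<open>My (d\<^sub>i + \<eta>) \<le> My \<eta> / (1 - a)\<close>, which is even sharper than the claimed bound.\<close>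

lemma l1norm_nonneg: "0 \<le> l1norm v"
  unfolding l1norm_def by (simp add: sum_nonneg)

lemma l1norm_zero [simp]: "l1norm 0 = 0"
  unfolding l1norm_def by simp

lemma lipschitz3_l1D:
  "lipschitz3_l1 M f \<Longrightarrow>
     l1norm (f a b c - f a' b' c') \<le> M * (l1norm (a - a') + l1norm (b - b') + l1norm (c - c'))"
  unfolding lipschitz3_l1_def by blast

lemma le_fixed_point_of_affine_recurrence:
  fixes d :: "nat \<Rightarrow> real"
  assumes "0 \<le> a" "a < 1" "d 0 \<le> b / (1 - a)"
    and step: "\<And>i. i < m \<Longrightarrow> d (Suc i) \<le> a * d i + b"
  shows "i \<le> m \<Longrightarrow> d i \<le> b / (1 - a)"
proof (induction i)
  case 0
  show ?case using assms(3) .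
next
  case (Suc i)
  have "d (Suc i) \<le> a * d i + b" using step Suc.prems by simp
  also have "\<dots> \<le> a * (b / (1 - a)) + b"
    using mult_left_mono[OF Suc.IH assms(1)] Suc.prems by simp
  also have "\<dots> = b / (1 - a)" using assms(2) by (simp add: field_simps)
  finally show ?case .
qed

lemma chan_out_Suc:
  "chan_out fy fz z0 x k (Suc i) = fy (chan_state fy fz z0 x k i) (x (Suc i)) (k (Suc i))"
  by (simp add: chan_out_def)

lemma chan_state_Suc_chan_out:
  "chan_state fy fz z0 x k (Suc i) =
     fz (chan_state fy fz z0 x k i) (chan_out fy fz z0 x k (Suc i)) (x (Suc i))"
  by (simp add: chan_out_Suc)

lemma chan_out_dist_le:
  assumes "lipschitz3_l1 My fy"
  shows "l1norm (chan_out fy fz z0 x1 k (Suc i) - chan_out fy fz z0 x2 k (Suc i))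
    \<le> My * (l1norm (chan_state fy fz z0 x1 k i - chan_state fy fz z0 x2 k i)
             + l1norm (x1 (Suc i) - x2 (Suc i)))"
  using lipschitz3_l1D[OF assms, of "chan_state fy fz z0 x1 k i" "x1 (Suc i)" "k (Suc i)"
      "chan_state fy fz z0 x2 k i" "x2 (Suc i)" "k (Suc i)"]
  by (simp add: chan_out_Suc)

lemma chan_state_dist_le:
  assumes "lipschitz3_l1 Mz fz"
  shows "l1norm (chan_state fy fz z0 x1 k (Suc i) - chan_state fy fz z0 x2 k (Suc i))
    \<le> Mz * (l1norm (chan_state fy fz z0 x1 k i - chan_state fy fz z0 x2 k i)
             + l1norm (chan_out fy fz z0 x1 k (Suc i) - chan_out fy fz z0 x2 k (Suc i))
             + l1norm (x1 (Suc i) - x2 (Suc i)))"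
  unfolding chan_state_Suc_chan_out[of _ _ _ x1] chan_state_Suc_chan_out[of _ _ _ x2]
  by (rule lipschitz3_l1D[OF assms])

lemma chan_state_dist_bound:
  assumes "0 \<le> My" "0 \<le> Mz" "lipschitz3_l1 My fy" "lipschitz3_l1 Mz fz"
    and "Mz * (My + 1) < 1" "0 \<le> \<eta>"
    and input: "\<forall>t\<in>{1..n}. l1norm (x1 t - x2 t) \<le> \<eta>"
    and "i < n"
  shows "l1norm (chan_state fy fz z0 x1 k i - chan_state fy fz z0 x2 k i)
    \<le> Mz * (My + 1) * \<eta> / (1 - Mz * (My + 1))"
proof -
  define d where "d i = l1norm (chan_state fy fz z0 x1 k i - chan_state fy fz z0 x2 k i)" for i
  have "d (Suc i) \<le> Mz * (My + 1) * d i + Mz * (My + 1) * \<eta>" if "i < n - 1" for i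
  proof -
    have x: "l1norm (x1 (Suc i) - x2 (Suc i)) \<le> \<eta>" using input that by auto
    have y: "l1norm (chan_out fy fz z0 x1 k (Suc i) - chan_out fy fz z0 x2 k (Suc i))
        \<le> My * (d i + \<eta>)"
      using chan_out_dist_le[OF assms(3)] mult_left_mono[OF add_left_mono[OF x] assms(1)]
      unfolding d_def by (rule order_trans)
    have "d (Suc i) \<le> Mz * (d i + My * (d i + \<eta>) + \<eta>)"
      using chan_state_dist_le[OF assms(4)] mult_left_mono[OF add_mono[OF add_left_mono[OF y] x] assms(2)]
      unfolding d_def by (rule order_trans)
    then show ?thesis by (simp add: algebra_simps)
  qed
  moreover have "d 0 \<le> Mz * (My + 1) * \<eta> / (1 - Mz * (My + 1))"
    using assms(1,2,5,6) by (simp add: d_def divide_nonneg_pos)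
  ultimately have "d i \<le> Mz * (My + 1) * \<eta> / (1 - Mz * (My + 1))"
    using le_fixed_point_of_affine_recurrence[of "Mz * (My + 1)" d _ "n - 1" i] assms(1,2,5,8)
    by simp
  then show ?thesis unfolding d_def .
qed

lemma chan_out_dist_bound:
  assumes "0 \<le> My" "0 \<le> Mz" "lipschitz3_l1 My fy" "lipschitz3_l1 Mz fz"
    and "Mz * (My + 1) < 1" "0 \<le> \<eta>"
    and input: "\<forall>t\<in>{1..n}. l1norm (x1 t - x2 t) \<le> \<eta>"
    and "t \<in> {1..n}"
  shows "l1norm (chan_out fy fz z0 x1 k t - chan_out fy fz z0 x2 k t)
    \<le> My / (1 - Mz * (My + 1)) * \<eta>"
proof -
  define a where "a = Mz * (My + 1)"
  obtain i where t: "t = Suc i" "i < n" using assms(8) by (cases t) auto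
  have x: "l1norm (x1 (Suc i) - x2 (Suc i)) \<le> \<eta>" using input assms(8) t(1) by blast
  have "l1norm (chan_out fy fz z0 x1 k t - chan_out fy fz z0 x2 k t)
      \<le> My * (l1norm (chan_state fy fz z0 x1 k i - chan_state fy fz z0 x2 k i) + \<eta>)"
    using chan_out_dist_le[OF assms(3)] mult_left_mono[OF add_left_mono[OF x] assms(1)]
    unfolding t(1) by (rule order_trans)
  also have "\<dots> \<le> My * (a * \<eta> / (1 - a) + \<eta>)"
    using chan_state_dist_bound[OF assms(1-7) t(2)] assms(1)
    unfolding a_def by (intro mult_left_mono) auto
  also have "\<dots> = My / (1 - a) * \<eta>"
    using assms(5) unfolding a_def by (simp add: field_simps)
  finally show ?thesis unfolding a_def .
qed

theorem lemma6:
  fixes fy :: "real ^ 'z \<Rightarrow> real ^ 'x \<Rightarrow> real ^ 'k \<Rightarrow> real ^ 'y"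
    and fz :: "real ^ 'z \<Rightarrow> real ^ 'y \<Rightarrow> real ^ 'x \<Rightarrow> real ^ 'z"
    and My Mz \<eta> :: real and n :: nat
    and z0 :: "real ^ 'z" and x1 x2 :: "nat \<Rightarrow> real ^ 'x" and k :: "nat \<Rightarrow> real ^ 'k"
  assumes "0 \<le> My" and "0 \<le> Mz"
    and "lipschitz3_l1 My fy" and "lipschitz3_l1 Mz fz"
    and "Mz * (My + 1) < 1"
    and "\<forall>t\<in>{1..n}. l1norm (x1 t - x2 t) \<le> \<eta>"
  shows "\<forall>t\<in>{1..n}. l1norm (chan_out fy fz z0 x1 k t - chan_out fy fz z0 x2 k t)
           \<le> My * (2 - Mz * (My + 1)) / (1 - Mz * (My + 1)) * \<eta>"
proof
  fix t assume t: "t \<in> {1..n}"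
  define a where "a = Mz * (My + 1)"
  have "0 \<le> \<eta>" using assms(6) t l1norm_nonneg order_trans by blast
  then have "l1norm (chan_out fy fz z0 x1 k t - chan_out fy fz z0 x2 k t) \<le> My / (1 - a) * \<eta>"
    using chan_out_dist_bound[OF assms(1-5) _ assms(6) t] unfolding a_def by blast
  also have "\<dots> \<le> My * (2 - a) / (1 - a) * \<eta>"
    using assms(1,2,5) \<open>0 \<le> \<eta>\<close> unfolding a_def
    by (intro mult_right_mono divide_right_mono) (auto simp: mult_le_cancel_left1)
  finally show "l1norm (chan_out fy fz z0 x1 k t - chan_out fy fz z0 x2 k t)
      \<le> My * (2 - Mz * (My + 1)) / (1 - Mz * (My + 1)) * \<eta>"
    unfolding a_def .
qed

end
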